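(* Let $\vec{G}$ be a DDMOG on $n$ vertices with DDM labeling $g$, and index its vertices as $v_1,\dots,v_n$ so that $g(v_i)=i$. Let $\vec{H}$ be an oriented graph on $m$ vertices, vertex-disjoint from $\vec{G}$, with a bijective labeling $h:V(\vec{H})\to\{n+1,\dots,n+m\}$ such that $k=\max_{v\in V(\vec{H})}|wt_h(v)|\le n$ and, for every $0\le i\le k$, $\sum_{v\in V_h^{i}(\vec{H})}h(v)=\sum_{v\in V_h^{-i}(\vec{H})}h(v)$. Then the weighted sum $\vec{G}\oplus_{wt_h}^0\vec{H}$ is a DDMOG on $n+m$ vertices.
   Context: An oriented graph is a finite digraph without loops such that whenever $(u,v)$ is an arc, $(v,u)$ is not. For a vertex $v$, $N^+(v)=\{x:(x,v)\text{ is an arc}\}$, $N^-(v)=\{x:(v,x)\text{ is an arc}\}$; for a labeling $f$, $wt_f(v)=\sum_{x\in N^+(v)}f(x)-\sum_{x\in N^-(v)}f(x)$. A DDM labeling of an oriented graph on $n$ vertices is a bijection $f:V\to\{1,\dots,n\}$ with $wt_f(v)=0$ for all $v$; a DDMOG is an oriented graph admitting one. For an oriented graph $\vec{H}$ with labeling $h$ and an integer $j$, $V_h^{j}(\vec{H})=\{u\in V(\vec{H}):wt_h(u)=j\}$. Weighted sum: let $\vec{G}$ have vertices $v_1,\dots,v_n$ (indexed by a labeling $g$ with $g(v_i)=i$), let $s\in\mathbb{Z}$, and let $\vec{H}$ (vertex-disjoint from $\vec{G}$) have a labeling $h:V(\vec{H})\to\mathbb{Z}^+$ with $\{|wt_h(u)|:u\in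 V(\vec{H})\}\subseteq\{0\}\cup\{i+s:1\le i\le n\}$. Then $\vec{G}\oplus_{wt_h}^s\vec{H}$ is the oriented graph with vertex set $V(\vec{G})\cup V(\vec{H})$ and arc set $E(\vec{G})\cup E(\vec{H})\cup\bigcup_{i=1}^n(E^i\cup E^{-i})$, where $E^i=\{(v_i,u):u\in V_h^{-i-s}(\vec{H})\}$ and $E^{-i}=\{(u,v_i):u\in V_h^{i+s}(\vec{H})\}$. *)

theory Defs
  imports Main
begin

definition oriented_graph :: "'a set \<Rightarrow> ('a \<times> 'a) set \<Rightarrow> bool" where
  "oriented_graph V E \<longleftrightarrow> finite V \<and> E \<subseteq> V \<times> V \<and>
     (\<forall>v. (v, v) \<notin> E) \<and> (\<forall>u v. (u, v) \<in> E \<longrightarrow> (v, u) \<notin> E)"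

definition in_nbrs :: "'a set \<Rightarrow> ('a \<times> 'a) set \<Rightarrow> 'a \<Rightarrow> 'a set" where
  "in_nbrs V E v = {x \<in> V. (x, v) \<in> E}"

definition out_nbrs :: "'a set \<Rightarrow> ('a \<times> 'a) set \<Rightarrow> 'a \<Rightarrow> 'a set" where
  "out_nbrs V E v = {x \<in> V. (v, x) \<in> E}"

definition wt :: "'a set \<Rightarrow> ('a \<times> 'a) set \<Rightarrow> ('a \<Rightarrow> int) \<Rightarrow> 'a \<Rightarrow> int" where
  "wt V E f v = (\<Sum>x\<in>in_nbrs V E v. f x) - (\<Sum>x\<in>out_nbrs V E v. f x)"

definition DDM_labeling :: "'a set \<Rightarrow> ('a \<times> 'a) set \<Rightarrow> ('a \<Rightarrow> int) \<Rightarrow> bool" where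
  "DDM_labeling V E f \<longleftrightarrow> bij_betw f V {1..int (card V)} \<and> (\<forall>v\<in>V. wt V E f v = 0)"

definition DDMOG :: "'a set \<Rightarrow> ('a \<times> 'a) set \<Rightarrow> bool" where
  "DDMOG V E \<longleftrightarrow> oriented_graph V E \<and> (\<exists>f. DDM_labeling V E f)"

definition wt_class :: "'a set \<Rightarrow> ('a \<times> 'a) set \<Rightarrow> ('a \<Rightarrow> int) \<Rightarrow> int \<Rightarrow> 'a set" where
  "wt_class V E h j = {u \<in> V. wt V E h u = j}"

text \<open>Weighted sum G (+)^s_{wt_h} H, where the vertices of G are indexed by the
  labeling g (v_i is the vertex with g v_i = i, 1 \<le> i \<le> n).
  Returns the arc set; the vertex set is VG \<union> VH.\<close>
definition wsum_arcs ::
  "'a set \<Rightarrow> ('a \<times> 'a) set \<Rightarrow> ('a \<Rightarrow> int) \<Rightarrow> int \<Rightarrow> 'a set \<Rightarrow> ('a \<times> 'a) set \<Rightarrow> ('a \<Rightarrow> int)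
     \<Rightarrow> ('a \<times> 'a) set" where
  "wsum_arcs VG EG g s VH EH h =
     EG \<union> EH
     \<union> (\<Union>i\<in>{1..int (card VG)}. {(v, u). v \<in> VG \<and> g v = i \<and> u \<in> wt_class VH EH h (- i - s)})
     \<union> (\<Union>i\<in>{1..int (card VG)}. {(u, v). v \<in> VG \<and> g v = i \<and> u \<in> wt_class VH EH h (i + s)})"

end

theory Submission
  imports Defs
begin

text \<open>Label the vertices of the weighted sum by g on G and by h on H. A vertex v of G with
  g v = i gains the in-neighbours of H of weight i and the out-neighbours of weight -i, so its
  weight changes by the difference of their h-sums, which is zero by the balance hypothesis
  (both classes are empty when i > k). A vertex u of H of weight w \<noteq> 0 gains exactly one
  neighbour in G, the vertex labelled |w| (it exists as |w| \<le> k \<le> n); it is an in-neighbour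
  if w < 0 and an out-neighbour if w > 0, and in either case it contributes -w, which cancels
  the weight of u.\<close>

definition join_labeling :: "'a set \<Rightarrow> ('a \<Rightarrow> int) \<Rightarrow> ('a \<Rightarrow> int) \<Rightarrow> 'a \<Rightarrow> int" where
  "join_labeling VG g h x = (if x \<in> VG then g x else h x)"

lemma oriented_graph_wsum_arcs:
  assumes G: "oriented_graph VG EG" and H: "oriented_graph VH EH"
    and disj: "VG \<inter> VH = {}" and s: "0 \<le> s"
  shows "oriented_graph (VG \<union> VH) (wsum_arcs VG EG g s VH EH h)"
proof -
  have arcs: "EG \<subseteq> VG \<times> VG" "EH \<subseteq> VH \<times> VH"
    using G H by (auto simp: oriented_graph_def)
  show ?thesis
    unfolding oriented_graph_def
  proof (intro conjI allI impI)
    show "finite (VG \<union> VH)"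
      using G H by (simp add: oriented_graph_def)
    show "wsum_arcs VG EG g s VH EH h \<subseteq> (VG \<union> VH) \<times> (VG \<union> VH)"
      using arcs by (auto simp: wsum_arcs_def wt_class_def)
    show "(v, v) \<notin> wsum_arcs VG EG g s VH EH h" for v
      using G H disj by (auto simp: wsum_arcs_def wt_class_def oriented_graph_def)
  next
    fix u v
    assume "(u, v) \<in> wsum_arcs VG EG g s VH EH h"
    \<comment> \<open>opposite arcs between v_i and H need a vertex of weight both i + s and -i - s,
      but i + s > 0\<close>
    then show "(v, u) \<notin> wsum_arcs VG EG g s VH EH h"
      using G H disj s by (auto simp: wsum_arcs_def wt_class_def oriented_graph_def)
  qed
qed

lemma bij_betw_join_labeling:
  assumes "bij_betw g VG {1..int n}" and "bij_betw h VH {int n + 1..int n + int m}"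
    and disj: "VG \<inter> VH = {}"
  shows "bij_betw (join_labeling VG g h) (VG \<union> VH) {1..int n + int m}"
proof -
  have "bij_betw (join_labeling VG g h) VG {1..int n}"
    using assms(1) by (rule bij_betw_cong[THEN iffD1, rotated]) (simp add: join_labeling_def)
  moreover have "bij_betw (join_labeling VG g h) VH {int n + 1..int n + int m}
      \<longleftrightarrow> bij_betw h VH {int n + 1..int n + int m}"
    using disj by (intro bij_betw_cong) (auto simp: join_labeling_def)
  ultimately have "bij_betw (join_labeling VG g h) (VG \<union> VH)
      ({1..int n} \<union> {int n + 1..int n + int m})"
    using assms(2) disj by (intro bij_betw_combine) auto
  moreover have "{1..int n} \<union> {int n + 1..int n + int m} = {1..int n + int m}"
    by auto
  ultimately show ?thesis
    by simp
qed

lemma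
  assumes G: "oriented_graph VG EG" and H: "oriented_graph VH EH" and disj: "VG \<inter> VH = {}"
    and x: "x \<in> VG" and gx: "g x \<in> {1..int (card VG)}"
  shows in_nbrs_wsum_arcs_left:
      "in_nbrs (VG \<union> VH) (wsum_arcs VG EG g s VH EH h) x
         = in_nbrs VG EG x \<union> wt_class VH EH h (g x + s)"
    and out_nbrs_wsum_arcs_left:
      "out_nbrs (VG \<union> VH) (wsum_arcs VG EG g s VH EH h) x
         = out_nbrs VG EG x \<union> wt_class VH EH h (- g x - s)"
  using G H disj x gx
  by (auto simp: wsum_arcs_def in_nbrs_def out_nbrs_def wt_class_def oriented_graph_def)

lemma
  assumes G: "oriented_graph VG EG" and H: "oriented_graph VH EH" and disj: "VG \<inter> VH = {}"
    and x: "x \<in> VH"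
  shows in_nbrs_wsum_arcs_right:
      "in_nbrs (VG \<union> VH) (wsum_arcs VG EG g s VH EH h) x
         = in_nbrs VH EH x \<union> {v \<in> VG. g v \<in> {1..int (card VG)} \<and> g v = - wt VH EH h x - s}"
    and out_nbrs_wsum_arcs_right:
      "out_nbrs (VG \<union> VH) (wsum_arcs VG EG g s VH EH h) x
         = out_nbrs VH EH x \<union> {v \<in> VG. g v \<in> {1..int (card VG)} \<and> g v = wt VH EH h x - s}"
  using G H disj x
  by (auto simp: wsum_arcs_def in_nbrs_def out_nbrs_def wt_class_def oriented_graph_def)

lemma wt_wsum_arcs_left:
  assumes G: "oriented_graph VG EG" and H: "oriented_graph VH EH" and disj: "VG \<inter> VH = {}"
    and x: "x \<in> VG" and gx: "g x \<in> {1..int (card VG)}"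
  shows "wt (VG \<union> VH) (wsum_arcs VG EG g s VH EH h) (join_labeling VG g h) x
    = wt VG EG g x + (\<Sum>u\<in>wt_class VH EH h (g x + s). h u)
        - (\<Sum>u\<in>wt_class VH EH h (- g x - s). h u)"
proof -
  let ?f = "join_labeling VG g h"
  have fin: "finite VG" "finite VH"
    using G H by (auto simp: oriented_graph_def)
  have on_G: "sum ?f A = sum g A" if "A \<subseteq> VG" for A
    using that by (intro sum.cong) (auto simp: join_labeling_def)
  have on_H: "sum ?f (wt_class VH EH h c) = sum h (wt_class VH EH h c)" for c
    using disj by (intro sum.cong) (auto simp: join_labeling_def wt_class_def)
  have split: "sum ?f (A \<union> wt_class VH EH h c) = sum g A + sum h (wt_class VH EH h c)"
    if "A \<subseteq> VG" for A c
  proof -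
    have "finite A" "finite (wt_class VH EH h c)" "A \<inter> wt_class VH EH h c = {}"
      using that fin disj by (auto intro: finite_subset simp: wt_class_def)
    then show ?thesis
      using that by (simp add: sum.union_disjoint on_G on_H)
  qed
  have "in_nbrs VG EG x \<subseteq> VG" "out_nbrs VG EG x \<subseteq> VG"
    by (auto simp: in_nbrs_def out_nbrs_def)
  then show ?thesis
    unfolding wt_def in_nbrs_wsum_arcs_left[where g = g, OF assms]
      out_nbrs_wsum_arcs_left[where g = g, OF assms] split[OF \<open>in_nbrs VG EG x \<subseteq> VG\<close>]
      split[OF \<open>out_nbrs VG EG x \<subseteq> VG\<close>]
    by simp
qed

lemma sum_label_fiber:
  assumes "bij_betw g V {1..int n}"
  shows "(\<Sum>v\<in>{v \<in> V. g v \<in> {1..int n} \<and> g v = c}. g v) = (if c \<in> {1..int n} then c else 0)"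
proof (cases "c \<in> {1..int n}")
  case True
  then obtain v where v: "v \<in> V" "g v = c"
    using assms by (metis bij_betw_iff_bijections)
  then have "{v \<in> V. g v \<in> {1..int n} \<and> g v = c} = {v}"
    using assms True by (auto simp: bij_betw_def inj_on_def)
  then show ?thesis
    using v True by simp
next
  case False
  then have no_fiber: "{v \<in> V. g v \<in> {1..int n} \<and> g v = c} = {}"
    by auto
  show ?thesis
    unfolding no_fiber using False by simp
qed

lemma wt_wsum_arcs_right:
  assumes G: "oriented_graph VG EG" and H: "oriented_graph VH EH" and disj: "VG \<inter> VH = {}"
    and g: "bij_betw g VG {1..int (card VG)}" and x: "x \<in> VH"
  shows "wt (VG \<union> VH) (wsum_arcs VG EG g s VH EH h) (join_labeling VG g h) x
    = wt VH EH h x + (if - wt VH EH h x - s \<in> {1..int (card VG)} then - wt VH EH h x - s else 0)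
        - (if wt VH EH h x - s \<in> {1..int (card VG)} then wt VH EH h x - s else 0)"
proof -
  let ?f = "join_labeling VG g h"
  let ?fiber = "\<lambda>c. {v \<in> VG. g v \<in> {1..int (card VG)} \<and> g v = c}"
  have fin: "finite VG" "finite VH"
    using G H by (auto simp: oriented_graph_def)
  have on_H: "sum ?f A = sum h A" if "A \<subseteq> VH" for A
    using that disj by (intro sum.cong) (auto simp: join_labeling_def)
  have on_G: "sum ?f (?fiber c) = sum g (?fiber c)" for c
    by (intro sum.cong) (auto simp: join_labeling_def)
  have split: "sum ?f (A \<union> ?fiber c) = sum h A + (if c \<in> {1..int (card VG)} then c else 0)"
    if "A \<subseteq> VH" for A c
  proof -
    have "finite A" "finite (?fiber c)" "A \<inter> ?fiber c = {}"
      using that fin disj by (auto intro: finite_subset)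
    then have "sum ?f (A \<union> ?fiber c) = sum h A + sum g (?fiber c)"
      using that by (simp only: sum.union_disjoint on_G on_H)
    then show ?thesis
      by (simp only: sum_label_fiber[OF g])
  qed
  have "in_nbrs VH EH x \<subseteq> VH" "out_nbrs VH EH x \<subseteq> VH"
    by (auto simp: in_nbrs_def out_nbrs_def)
  then show ?thesis
    unfolding wt_def in_nbrs_wsum_arcs_right[OF G H disj x]
      out_nbrs_wsum_arcs_right[OF G H disj x] split[OF \<open>in_nbrs VH EH x \<subseteq> VH\<close>]
      split[OF \<open>out_nbrs VH EH x \<subseteq> VH\<close>]
    by simp
qed

lemma wt_class_eq_empty_if_gt_Max:
  assumes "finite V" and "Max ((\<lambda>v. \<bar>wt V E h v\<bar>) ` V) < \<bar>c\<bar>"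
  shows "wt_class V E h c = {}"
  using assms Max_ge[of "(\<lambda>v. \<bar>wt V E h v\<bar>) ` V"] by (fastforce simp: wt_class_def)

theorem theorem6:
  fixes VG VH :: "'a set" and EG EH :: "('a \<times> 'a) set" and g h :: "'a \<Rightarrow> int"
    and n m :: nat and k :: int
  assumes G: "oriented_graph VG EG" and g: "DDM_labeling VG EG g" and n: "card VG = n"
    and H: "oriented_graph VH EH" and m: "card VH = m"
    and disj: "VG \<inter> VH = {}"
    and h: "bij_betw h VH {int n + 1 .. int n + int m}"
    and k: "k = Max ((\<lambda>v. \<bar>wt VH EH h v\<bar>) ` VH)"
    and kn: "k \<le> int n"
    and bal: "\<forall>i. 0 \<le> i \<and> i \<le> k \<longrightarrow>
       (\<Sum>v\<in>wt_class VH EH h i. h v) = (\<Sum>v\<in>wt_class VH EH h (- i). h v)"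
  shows "DDMOG (VG \<union> VH) (wsum_arcs VG EG g 0 VH EH h) \<and> card (VG \<union> VH) = n + m"
proof -
  have fin: "finite VG" "finite VH"
    using G H by (auto simp: oriented_graph_def)
  have card: "card (VG \<union> VH) = n + m"
    using fin disj n m by (simp add: card_Un_disjoint)
  have gb: "bij_betw g VG {1..int n}" and wt_g: "\<forall>v\<in>VG. wt VG EG g v = 0"
    using g n by (auto simp: DDM_labeling_def)
  have wt_h_bound: "\<bar>wt VH EH h u\<bar> \<le> k" if "u \<in> VH" for u
    unfolding k using fin that by (intro Max_ge) auto
  have "wt (VG \<union> VH) (wsum_arcs VG EG g 0 VH EH h) (join_labeling VG g h) x = 0"
    if x: "x \<in> VG \<union> VH" for x
  proof (cases "x \<in> VG")
    case True
    then have "g x \<in> {1..int (card VG)}"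
      using gb n by (auto simp: bij_betw_def)
    moreover have "(\<Sum>u\<in>wt_class VH EH h (g x). h u) = (\<Sum>u\<in>wt_class VH EH h (- g x). h u)"
      using bal \<open>g x \<in> {1..int (card VG)}\<close>
        wt_class_eq_empty_if_gt_Max[OF fin(2), where E = EH and h = h and c = "g x", folded k]
        wt_class_eq_empty_if_gt_Max[OF fin(2), where E = EH and h = h and c = "- g x", folded k]
      by (cases "g x \<le> k") auto
    ultimately show ?thesis
      using wt_wsum_arcs_left[OF G H disj True] wt_g True by simp
  next
    case False
    then show ?thesis
      using x wt_wsum_arcs_right[OF G H disj gb[folded n]] wt_h_bound[of x] kn n by auto
  qed
  then have "DDM_labeling (VG \<union> VH) (wsum_arcs VG EG g 0 VH EH h) (join_labeling VG g h)"
    using bij_betw_join_labeling[OF gb h disj] card by (simp add: DDM_labeling_def)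
  then show ?thesis
    using oriented_graph_wsum_arcs[OF G H disj] card by (auto simp: DDMOG_def)
qed

end
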